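(* Let $\mathbf{A}$ be a $0$-$1$ matrix of full row rank with $I$ columns and at least one $1$ in every column, and let $RM_{\boldsymbol\lambda}(\mathbf{A})=\{\boldsymbol\lambda\in\mathbb{R}^I_{>0}:\ \log\boldsymbol\lambda=\mathbf{A}'\boldsymbol\theta \text{ for some }\boldsymbol\theta\}$. Let $\{\boldsymbol\lambda_0^{r}\}_{r\ge1}\subset RM_{\boldsymbol\lambda}(\mathbf{A})$ be a sequence of true parameters with $\|\boldsymbol\lambda_0^r\|:=\min_{i}\lambda^r_{0,i}\to\infty$, and for each $r$ let $\boldsymbol Y^r=(Y^r_1,\dots,Y^r_I)$ have independent components $Y^r_i\sim\mathrm{Poisson}(\lambda^r_{0,i})$. Assume that the maximum likelihood estimate $\hat{\boldsymbol\lambda}^r$ of $\boldsymbol\lambda_0^r$ under $RM_{\boldsymbol\lambda}(\mathbf{A})$ exists. Then $$\Delta[(\boldsymbol\lambda_0^r)^{-1/2}]\,(\hat{\boldsymbol\lambda}^r-\boldsymbol\lambda_0^r)=O_p(\mathbf 1)\quad\text{as } \|\boldsymbol\lambda_0^r\|\to\infty.$$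
   Context: $\Delta[\boldsymbol v]$ denotes the diagonal matrix with the vector $\boldsymbol v$ on its diagonal; powers and logarithms of vectors are taken componentwise. $\|\boldsymbol\lambda\|$ denotes the minimum component $\min_i\lambda_i$ (not a standard norm). The MLE under the model is the maximizer over $RM_{\boldsymbol\lambda}(\mathbf{A})$ of the Poisson log-likelihood $\boldsymbol Y'\log\boldsymbol\lambda-\mathbf 1'\boldsymbol\lambda$; it is said to exist when this maximum is attained in $RM_{\boldsymbol\lambda}(\mathbf{A})$. *)

theory Defs
  imports "HOL-Analysis.Analysis" "HOL-Probability.Probability"
begin

text \<open>Rows of A indexed by 'j (J parameters), columns by 'i (I cells).\<close>

definition RM :: "real^'i^'j \<Rightarrow> (real^'i) set" where
  "RM A = {lam. (\<forall>i. lam $ i > 0) \<and> (\<exists>\<theta>::real^'j. (\<chi> i. ln (lam $ i)) = transpose A *v \<theta>)}"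

definition pois_loglik :: "('i::finite \<Rightarrow> nat) \<Rightarrow> real^'i \<Rightarrow> real" where
  "pois_loglik y lam = (\<Sum>i\<in>UNIV. real (y i) * ln (lam $ i)) - (\<Sum>i\<in>UNIV. lam $ i)"

definition is_MLE :: "real^'i::finite^'j \<Rightarrow> ('i \<Rightarrow> nat) \<Rightarrow> real^'i \<Rightarrow> bool" where
  "is_MLE A y lam \<longleftrightarrow> lam \<in> RM A \<and> (\<forall>mu\<in>RM A. pois_loglik y mu \<le> pois_loglik y lam)"

definition min_comp :: "real^'i::finite \<Rightarrow> real" where
  "min_comp lam = Min (range (\<lambda>i. lam $ i))"

definition pois_vec :: "real^'i::finite \<Rightarrow> ('i \<Rightarrow> nat) pmf" where
  "pois_vec lam = Pi_pmf UNIV 0 (\<lambda>i. poisson_pmf (lam $ i))"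

end

theory Submission
  imports Defs
begin

text \<open>
  Write \<open>\<mu>\<close> for the true parameter and \<open>\<lambda>\<close> for the MLE. Since the model is log-linear,
  \<open>\<lambda>\<close> can be moved towards \<open>\<mu>\<close> along a path inside the model, and first-order optimality
  gives the score equation \<open>\<Sum>\<^sub>i (y\<^sub>i - \<lambda>\<^sub>i) (ln \<mu>\<^sub>i - ln \<lambda>\<^sub>i) = 0\<close>. Hence the nonnegative
  terms \<open>d\<^sub>i = (\<lambda>\<^sub>i - \<mu>\<^sub>i) (ln \<lambda>\<^sub>i - ln \<mu>\<^sub>i)\<close> satisfy
  \<open>\<Sum>\<^sub>i d\<^sub>i = \<Sum>\<^sub>i (y\<^sub>i - \<mu>\<^sub>i) (ln \<lambda>\<^sub>i - ln \<mu>\<^sub>i)\<close>. If every count lies within \<open>K \<surd>\<mu>\<^sub>i\<close> of its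
  mean and all \<open>\<mu>\<^sub>i \<ge> 16 K\<^sup>2\<close>, each summand on the right is at most \<open>d\<^sub>i / 2 + 4 K\<^sup>2\<close>, so
  \<open>\<Sum>\<^sub>i d\<^sub>i \<le> 8 I K\<^sup>2\<close>; and \<open>3 d\<^sub>i + 1\<close> bounds the standardized error \<open>|\<lambda>\<^sub>i - \<mu>\<^sub>i| / \<surd>\<mu>\<^sub>i\<close>.
  By Chebyshev's inequality for the Poisson counts, that event fails with probability at
  most \<open>I / K\<^sup>2\<close>, uniformly in \<open>\<mu>\<close>.
\<close>

lemma ln_diff_le: "0 < u \<Longrightarrow> 0 < v \<Longrightarrow> ln u - ln v \<le> (u - v) / v" for u v :: real
  using ln_le_minus_one[of "u / v"] by (simp add: ln_div diff_divide_distrib)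

lemma diff_mult_ln_diff_eq_abs:
  fixes x y :: real assumes "0 < x" "0 < y"
  shows "(x - y) * (ln x - ln y) = \<bar>x - y\<bar> * \<bar>ln x - ln y\<bar>"
proof -
  have "0 \<le> (x - y) * (ln x - ln y)"
    using assms by (cases "x \<le> y") (auto intro: mult_nonpos_nonpos)
  then show ?thesis by (simp add: abs_mult[symmetric])
qed

lemma abs_ln_diff_le:
  fixes x y :: real assumes y: "0 < y" and close: "\<bar>x - y\<bar> \<le> y / 2"
  shows "\<bar>ln x - ln y\<bar> \<le> 2 * \<bar>x - y\<bar> / y"
proof (cases "y \<le> x")
  case True
  then have "0 \<le> ln x - ln y" using y by simp
  moreover have "ln x - ln y \<le> (x - y) / y" using True y by (intro ln_diff_le) auto
  ultimately show ?thesis using True y by (simp add: field_simps)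
next
  case False
  have x: "y / 2 \<le> x" using close False by linarith
  then have "ln y - ln x \<le> (y - x) / x" using y by (intro ln_diff_le) auto
  also have "\<dots> \<le> (y - x) / (y / 2)" using False x y by (intro divide_left_mono) auto
  finally have "ln y - ln x \<le> 2 * (y - x) / y" by (simp add: field_simps)
  moreover have "ln x \<le> ln y" using False x y by simp
  ultimately show ?thesis using False by simp
qed

lemma abs_diff_div_le_abs_ln_diff:
  fixes x y :: real assumes x: "0 < x" and y: "0 < y" and near: "x \<le> 3 * y"
  shows "\<bar>x - y\<bar> / (3 * y) \<le> \<bar>ln x - ln y\<bar>"
proof (cases "x < y")
  case True
  have "ln x - ln y \<le> (x - y) / y" using x y by (rule ln_diff_le)
  moreover have "(y - x) / (3 * y) \<le> (y - x) / y"
    using True y by (intro divide_left_mono) auto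
  ultimately show ?thesis using True by (simp add: diff_divide_distrib)
next
  case False
  have "ln y - ln x \<le> (y - x) / x" using y x by (rule ln_diff_le)
  moreover have "(x - y) / (3 * y) \<le> (x - y) / x"
    using False near x by (intro divide_left_mono) auto
  ultimately have "(x - y) / (3 * y) \<le> ln x - ln y" by (simp add: diff_divide_distrib)
  then show ?thesis using False by simp
qed

lemma abs_diff_div_sqrt_le_ln_divergence:
  fixes x y :: real assumes x: "0 < x" and y: "1 \<le> y"
  shows "\<bar>x - y\<bar> / sqrt y \<le> 3 * ((x - y) * (ln x - ln y)) + 1"
proof -
  have y0: "0 < y" using y by simp
  define a where "a = \<bar>x - y\<bar> / sqrt y"
  have d: "(x - y) * (ln x - ln y) = \<bar>x - y\<bar> * \<bar>ln x - ln y\<bar>"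
    using x y0 by (rule diff_mult_ln_diff_eq_abs)
  show ?thesis
  proof (cases "x \<le> 3 * y")
    case True
    then have "\<bar>x - y\<bar> * (\<bar>x - y\<bar> / y) \<le> \<bar>x - y\<bar> * (3 * \<bar>ln x - ln y\<bar>)"
      using abs_diff_div_le_abs_ln_diff[OF x y0] y0 by (intro mult_left_mono) (auto simp: field_simps)
    then have "a\<^sup>2 \<le> 3 * ((x - y) * (ln x - ln y))"
      unfolding a_def d using y0 by (simp add: power_divide power2_eq_square)
    moreover have "a \<le> a\<^sup>2 + 1"
    proof -
      have "2 * a \<le> a\<^sup>2 + 1" using sum_squares_ge_zero[of "a - 1" 0]
        by (simp add: power2_eq_square algebra_simps)
      moreover have "0 \<le> a" unfolding a_def using y0 by simp
      ultimately show ?thesis by linarith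
    qed
    ultimately show ?thesis unfolding a_def by linarith
  next
    case False
    have "ln y - ln x \<le> (y - x) / x" using y0 x by (rule ln_diff_le)
    then have "(x - y) / x \<le> ln x - ln y" by (simp add: diff_divide_distrib)
    moreover have "1 / 3 \<le> (x - y) / x" using False x by (simp add: field_simps)
    ultimately have "1 / 3 \<le> ln x - ln y" by linarith
    then have "\<bar>x - y\<bar> * 1 \<le> \<bar>x - y\<bar> * (3 * \<bar>ln x - ln y\<bar>)"
      by (intro mult_left_mono) auto
    then have "\<bar>x - y\<bar> \<le> 3 * ((x - y) * (ln x - ln y))" unfolding d by simp
    moreover have "a \<le> \<bar>x - y\<bar>"
      unfolding a_def using y by (simp add: divide_le_eq mult_le_cancel_left1)
    ultimately show ?thesis unfolding a_def by linarith
  qed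
qed

lemma sqrt_mult_abs_ln_diff_le:
  fixes x y K :: real
  assumes x: "0 < x" and y: "0 < y" and K: "0 \<le> K" and large: "16 * K\<^sup>2 \<le> y"
  shows "K * sqrt y * \<bar>ln x - ln y\<bar> \<le> (x - y) * (ln x - ln y) / 2 + 4 * K\<^sup>2"
proof -
  have d: "(x - y) * (ln x - ln y) = \<bar>x - y\<bar> * \<bar>ln x - ln y\<bar>"
    using x y by (rule diff_mult_ln_diff_eq_abs)
  have sqrt_y: "4 * K \<le> sqrt y"
    using large y by (intro real_le_rsqrt) (simp add: power_mult_distrib)
  show ?thesis
  proof (cases "\<bar>x - y\<bar> < 2 * K * sqrt y")
    case True
    have "2 * K * sqrt y \<le> sqrt y / 2 * sqrt y"
      using sqrt_y y by (intro mult_right_mono) auto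
    then have "\<bar>x - y\<bar> \<le> y / 2" using True y by simp
    then have "\<bar>ln x - ln y\<bar> \<le> 2 * \<bar>x - y\<bar> / y" using y by (intro abs_ln_diff_le)
    then have "K * sqrt y * \<bar>ln x - ln y\<bar> \<le> K * sqrt y * (2 * \<bar>x - y\<bar> / y)"
      using K y by (intro mult_left_mono) auto
    also have "\<dots> = 2 * K * (\<bar>x - y\<bar> / sqrt y)"
      using y by (simp add: field_simps real_sqrt_mult[symmetric])
    also have "\<dots> \<le> 2 * K * (2 * K)"
      using True K y by (intro mult_left_mono) (auto simp: divide_le_eq)
    finally have "K * sqrt y * \<bar>ln x - ln y\<bar> \<le> 4 * K\<^sup>2" by (simp add: power2_eq_square)
    moreover have "0 \<le> (x - y) * (ln x - ln y)" unfolding d by simp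
    ultimately show ?thesis by linarith
  next
    case False
    then have "K * sqrt y * \<bar>ln x - ln y\<bar> \<le> \<bar>x - y\<bar> / 2 * \<bar>ln x - ln y\<bar>"
      by (intro mult_right_mono) auto
    then show ?thesis unfolding d by (simp add: zero_le_power2 add_increasing2)
  qed
qed

lemma score_equation_scaled_deviation_le:
  fixes mu lam y :: "'i::finite \<Rightarrow> real" and K :: real
  assumes K: "1 \<le> K" and large: "\<And>j. 16 * K\<^sup>2 \<le> mu j" and lam: "\<And>j. 0 < lam j"
    and dev: "\<And>j. \<bar>y j - mu j\<bar> \<le> K * sqrt (mu j)"
    and score: "(\<Sum>j\<in>UNIV. (y j - lam j) * (ln (mu j) - ln (lam j))) = 0"
  shows "\<bar>lam i - mu i\<bar> / sqrt (mu i) \<le> 24 * CARD('i) * K\<^sup>2 + 1"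
proof -
  define d where "d j = (lam j - mu j) * (ln (lam j) - ln (mu j))" for j
  have "1 \<le> K\<^sup>2" using K by (simp add: one_le_power)
  then have mu_ge_1: "1 \<le> mu j" for j using large[of j] by linarith
  then have mu_pos: "0 < mu j" for j using less_le_trans[OF zero_less_one] by blast
  have d_nonneg: "0 \<le> d j" for j
    unfolding d_def using lam[of j] mu_pos[of j] by (subst diff_mult_ln_diff_eq_abs) auto
  have "(\<Sum>j\<in>UNIV. d j) = (\<Sum>j\<in>UNIV. (y j - mu j) * (ln (lam j) - ln (mu j)))"
  proof -
    have "d j = (y j - mu j) * (ln (lam j) - ln (mu j)) + (y j - lam j) * (ln (mu j) - ln (lam j))"
      for j unfolding d_def by (simp add: algebra_simps)
    then show ?thesis using score by (simp add: sum.distrib)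
  qed
  also have "\<dots> \<le> (\<Sum>j\<in>UNIV. K * sqrt (mu j) * \<bar>ln (lam j) - ln (mu j)\<bar>)"
  proof (intro sum_mono)
    fix j
    have "(y j - mu j) * (ln (lam j) - ln (mu j)) \<le> \<bar>y j - mu j\<bar> * \<bar>ln (lam j) - ln (mu j)\<bar>"
      by (simp add: abs_mult[symmetric])
    also have "\<dots> \<le> K * sqrt (mu j) * \<bar>ln (lam j) - ln (mu j)\<bar>"
      using dev by (intro mult_right_mono) auto
    finally show "(y j - mu j) * (ln (lam j) - ln (mu j)) \<le> \<dots>" .
  qed
  also have "\<dots> \<le> (\<Sum>j\<in>UNIV. d j / 2 + 4 * K\<^sup>2)"
    unfolding d_def using K lam large mu_pos by (intro sum_mono sqrt_mult_abs_ln_diff_le) auto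
  also have "\<dots> = (\<Sum>j\<in>UNIV. d j) / 2 + CARD('i) * (4 * K\<^sup>2)"
    by (simp add: sum.distrib sum_divide_distrib)
  finally have "(\<Sum>j\<in>UNIV. d j) \<le> 8 * CARD('i) * K\<^sup>2" by simp
  moreover have "d i \<le> (\<Sum>j\<in>UNIV. d j)" using d_nonneg by (intro member_le_sum) auto
  ultimately show ?thesis
    using abs_diff_div_sqrt_le_ln_divergence[OF lam mu_ge_1, of i i] unfolding d_def by linarith
qed

lemma RM_pos: "lam \<in> RM A \<Longrightarrow> 0 < lam $ i"
  unfolding RM_def by auto

lemma RM_log_interpolation:
  assumes lam: "lam \<in> RM A" and mu: "mu \<in> RM A"
  shows "(\<chi> i. lam $ i * exp (t * (ln (mu $ i) - ln (lam $ i)))) \<in> RM A"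
proof -
  from lam obtain \<theta> where \<theta>: "(\<chi> i. ln (lam $ i)) = transpose A *v \<theta>"
    unfolding RM_def by auto
  have lam_ne: "lam $ i \<noteq> 0" for i using RM_pos[OF lam, of i] by simp
  from mu obtain \<eta> where \<eta>: "(\<chi> i. ln (mu $ i)) = transpose A *v \<eta>"
    unfolding RM_def by auto
  have "(\<chi> i. ln (lam $ i * exp (t * (ln (mu $ i) - ln (lam $ i)))))
      = (\<chi> i. ln (lam $ i)) + t *\<^sub>R ((\<chi> i. ln (mu $ i)) - (\<chi> i. ln (lam $ i)))"
    by (simp add: vec_eq_iff ln_mult lam_ne algebra_simps)
  also have "\<dots> = transpose A *v (\<theta> + t *\<^sub>R (\<eta> - \<theta>))"
    unfolding \<theta> \<eta> by (simp add: algebra_simps)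
  finally show ?thesis unfolding RM_def using RM_pos[OF lam] by auto
qed

lemma is_MLE_score_equation:
  assumes mle: "is_MLE A y lam" and mu: "mu \<in> RM A"
  shows "(\<Sum>i\<in>UNIV. (real (y i) - lam $ i) * (ln (mu $ i) - ln (lam $ i))) = 0"
proof -
  from mle have lam: "lam \<in> RM A" and opt: "\<And>nu. nu \<in> RM A \<Longrightarrow> pois_loglik y nu \<le> pois_loglik y lam"
    unfolding is_MLE_def by auto
  have lam_ne: "lam $ i \<noteq> 0" for i using RM_pos[OF lam, of i] by simp
  define d where "d i = ln (mu $ i) - ln (lam $ i)" for i
  define g where "g t = pois_loglik y (\<chi> i. lam $ i * exp (t * d i))" for t
  have g_eq: "g t = (\<Sum>i\<in>UNIV. real (y i) * (ln (lam $ i) + t * d i)) - (\<Sum>i\<in>UNIV. lam $ i * exp (t * d i))"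
    for t unfolding g_def pois_loglik_def by (simp add: ln_mult lam_ne)
  have g_max: "g t \<le> g 0" for t
    unfolding g_def d_def using opt[OF RM_log_interpolation[OF lam mu]] by simp
  have "(g has_real_derivative (\<Sum>i\<in>UNIV. d i * real (y i)) - (\<Sum>i\<in>UNIV. d i * lam $ i)) (at 0)"
    unfolding g_eq[abs_def] by (auto intro!: derivative_eq_intros)
  then have "(\<Sum>i\<in>UNIV. d i * real (y i)) - (\<Sum>i\<in>UNIV. d i * lam $ i) = 0"
    by (rule DERIV_local_max[of _ _ _ 1]) (auto intro: g_max)
  then show ?thesis unfolding d_def by (simp add: sum_subtractf sum.distrib algebra_simps)
qed

lemma poisson_second_central_moment:
  fixes m :: real assumes m: "0 < m"
  shows "(\<lambda>k. pmf (poisson_pmf m) k * (real k - m)\<^sup>2) sums m"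
proof -
  define f where "f k = m ^ k / fact k" for k :: nat
  have f_Suc: "real (Suc n) * f (Suc n) = m * f n" for n
    unfolding f_def by (simp del: of_nat_Suc)
  have S0: "f sums exp m"
    using exp_converges[of m] unfolding f_def by (simp add: divide_inverse_commute)
  \<comment> \<open>factorial moments: \<open>\<Sum> k f\<^sub>k = m e\<^sup>m\<close> and \<open>\<Sum> k (k - 1) f\<^sub>k = m\<^sup>2 e\<^sup>m\<close>, by shifting the index\<close>
  have "(\<lambda>n. real (Suc n) * f (Suc n)) sums (m * exp m)"
    unfolding f_Suc by (intro sums_mult S0)
  then have S1: "(\<lambda>k. real k * f k) sums (m * exp m)"
    by (subst (asm) sums_Suc_iff) simp
  have "real (Suc n) * (real (Suc n) - 1) * f (Suc n) = m * (real n * f n)" for n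
  proof -
    have "real (Suc n) * (real (Suc n) - 1) * f (Suc n) = real n * (real (Suc n) * f (Suc n))"
      by (simp add: algebra_simps)
    also have "\<dots> = m * (real n * f n)" unfolding f_Suc by simp
    finally show ?thesis .
  qed
  then have "(\<lambda>n. real (Suc n) * (real (Suc n) - 1) * f (Suc n)) sums (m * (m * exp m))"
    using sums_mult[OF S1, of m] by (simp del: of_nat_Suc)
  then have S2: "(\<lambda>k. real k * (real k - 1) * f k) sums (m * (m * exp m))"
    by (subst (asm) sums_Suc_iff) simp
  have "(\<lambda>k. real k * (real k - 1) * f k + (1 - 2 * m) * (real k * f k) + m\<^sup>2 * f k)
      sums (m * (m * exp m) + (1 - 2 * m) * (m * exp m) + m\<^sup>2 * exp m)"
    by (intro sums_add sums_mult S0 S1 S2)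
  then have "(\<lambda>k. exp (- m) * (f k * (real k - m)\<^sup>2)) sums (exp (- m) * (m * exp m))"
    by (intro sums_mult) (simp add: power2_eq_square algebra_simps)
  then show ?thesis using m unfolding f_def by (simp add: exp_minus field_simps)
qed

lemma poisson_deviation_prob_le:
  fixes m t :: real assumes m: "0 < m" and t: "0 < t"
  shows "measure_pmf.prob (poisson_pmf m) {k. t < \<bar>real k - m\<bar>} \<le> m / t\<^sup>2"
proof -
  define S where "S = {k. t < \<bar>real k - m\<bar>}"
  define h where "h k = pmf (poisson_pmf m) k * (real k - m)\<^sup>2" for k
  have h: "h sums m" unfolding h_def using m by (rule poisson_second_central_moment)
  have "emeasure (measure_pmf (poisson_pmf m)) S = (\<integral>\<^sup>+ k. indicator S k \<partial>measure_pmf (poisson_pmf m))"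
    by simp
  also have "\<dots> \<le> (\<integral>\<^sup>+ k. ennreal ((real k - m)\<^sup>2 / t\<^sup>2) \<partial>measure_pmf (poisson_pmf m))"
  proof (intro nn_integral_mono)
    fix k
    show "indicator S k \<le> ennreal ((real k - m)\<^sup>2 / t\<^sup>2)"
    proof (cases "k \<in> S")
      case True
      then have "t\<^sup>2 \<le> (real k - m)\<^sup>2"
        using power_mono[of t "\<bar>real k - m\<bar>" 2] t unfolding S_def by simp
      then show ?thesis using True t by simp
    qed simp
  qed
  also have "\<dots> = (\<integral>\<^sup>+ k. ennreal (pmf (poisson_pmf m) k) * ennreal ((real k - m)\<^sup>2 / t\<^sup>2) \<partial>count_space UNIV)"
    by (rule nn_integral_measure_pmf)
  also have "\<dots> = (\<Sum>k. ennreal (h k / t\<^sup>2))"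
    unfolding nn_integral_count_space_nat
    by (intro suminf_cong) (simp add: h_def ennreal_mult'[symmetric])
  also have "\<dots> = ennreal (\<Sum>k. h k / t\<^sup>2)"
    using summable_divide[OF sums_summable[OF h], of "t\<^sup>2"] by (intro suminf_ennreal2) (auto simp: h_def)
  also have "(\<Sum>k. h k / t\<^sup>2) = m / t\<^sup>2"
    using sums_divide[OF h, of "t\<^sup>2"] by (simp add: sums_iff)
  finally show ?thesis
    unfolding S_def using m t by (simp add: measure_pmf.emeasure_eq_measure ennreal_le_iff)
qed

lemma pois_vec_deviation_prob_le:
  assumes pos: "0 < mu $ i" and K: "0 < K"
  shows "measure_pmf.prob (pois_vec mu) {y. K * sqrt (mu $ i) < \<bar>real (y i) - mu $ i\<bar>} \<le> 1 / K\<^sup>2"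
proof -
  have "measure_pmf.prob (pois_vec mu) {y. K * sqrt (mu $ i) < \<bar>real (y i) - mu $ i\<bar>}
      = measure_pmf.prob (map_pmf (\<lambda>y. y i) (pois_vec mu)) {k. K * sqrt (mu $ i) < \<bar>real k - mu $ i\<bar>}"
    by (simp add: measure_map_pmf vimage_def)
  also have "map_pmf (\<lambda>y. y i) (pois_vec mu) = poisson_pmf (mu $ i)"
    unfolding pois_vec_def by (subst Pi_pmf_component) auto
  also have "measure_pmf.prob (poisson_pmf (mu $ i)) {k. K * sqrt (mu $ i) < \<bar>real k - mu $ i\<bar>}
      \<le> mu $ i / (K * sqrt (mu $ i))\<^sup>2"
    using pos K by (intro poisson_deviation_prob_le) auto
  also have "\<dots> = 1 / K\<^sup>2" using pos K by (simp add: power_mult_distrib)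
  finally show ?thesis .
qed

lemma is_MLE_scaled_error_le:
  fixes A :: "real^'i::finite^'j::finite" and K :: real
  assumes mu: "mu \<in> RM A" and K: "1 \<le> K" and large: "\<And>i. 16 * K\<^sup>2 \<le> mu $ i"
    and mle: "is_MLE A y lam" and dev: "\<And>i. \<bar>real (y i) - mu $ i\<bar> \<le> K * sqrt (mu $ i)"
  shows "norm (\<chi> i. (lam $ i - mu $ i) / sqrt (mu $ i)) \<le> CARD('i) * (24 * CARD('i) * K\<^sup>2 + 1)"
proof -
  have lam_pos: "0 < lam $ i" for i using mle by (auto simp: is_MLE_def RM_pos)
  have mu_pos: "0 < mu $ i" for i using mu by (rule RM_pos)
  have score: "(\<Sum>i\<in>UNIV. (real (y i) - lam $ i) * (ln (mu $ i) - ln (lam $ i))) = 0"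
    using mle mu by (rule is_MLE_score_equation)
  have "\<bar>lam $ i - mu $ i\<bar> / sqrt (mu $ i) \<le> 24 * CARD('i) * K\<^sup>2 + 1" for i
    using score_equation_scaled_deviation_le[of K "\<lambda>i. mu $ i" "\<lambda>i. lam $ i" "\<lambda>i. real (y i)"]
      K large lam_pos dev score by blast
  then have bound: "\<bar>(\<chi> i. (lam $ i - mu $ i) / sqrt (mu $ i)) $ i\<bar> \<le> 24 * CARD('i) * K\<^sup>2 + 1" for i
    using mu_pos[of i] by (simp add: abs_divide)
  have "norm (\<chi> i. (lam $ i - mu $ i) / sqrt (mu $ i)) \<le> (\<Sum>i\<in>(UNIV::'i set). 24 * CARD('i) * K\<^sup>2 + 1)"
    by (intro order_trans[OF norm_le_l1_cart] sum_mono bound)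
  then show ?thesis by simp
qed

lemma prob_MLE_scaled_error_gt_le:
  fixes A :: "real^'i::finite^'j::finite" and K :: real
  assumes mu: "mu \<in> RM A" and K: "1 \<le> K" and large: "\<And>i. 16 * K\<^sup>2 \<le> mu $ i"
  shows "measure_pmf.prob (pois_vec mu)
           {y. \<exists>lam. is_MLE A y lam \<and>
                CARD('i) * (24 * CARD('i) * K\<^sup>2 + 1) < norm (\<chi> i. (lam $ i - mu $ i) / sqrt (mu $ i))}
         \<le> CARD('i) / K\<^sup>2"
proof -
  let ?far = "{y. \<exists>lam. is_MLE A y lam \<and>
                CARD('i) * (24 * CARD('i) * K\<^sup>2 + 1) < norm (\<chi> i. (lam $ i - mu $ i) / sqrt (mu $ i))}"
  let ?dev = "\<lambda>i. {y. K * sqrt (mu $ i) < \<bar>real (y i) - mu $ i\<bar>}"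
  have mu_pos: "0 < mu $ i" for i using mu by (rule RM_pos)
  have "?far \<subseteq> (\<Union>i. ?dev i)"
  proof safe
    fix y lam assume mle: "is_MLE A y lam"
      and far: "CARD('i) * (24 * CARD('i) * K\<^sup>2 + 1) < norm (\<chi> i. (lam $ i - mu $ i) / sqrt (mu $ i))"
    show "y \<in> (\<Union>i. ?dev i)"
    proof (rule ccontr)
      assume "y \<notin> (\<Union>i. ?dev i)"
      then have "\<And>i. \<bar>real (y i) - mu $ i\<bar> \<le> K * sqrt (mu $ i)" by (auto simp: not_less)
      with is_MLE_scaled_error_le[OF mu K large mle] far show False by fastforce
    qed
  qed
  then have "measure_pmf.prob (pois_vec mu) ?far \<le> measure_pmf.prob (pois_vec mu) (\<Union>i. ?dev i)"
    by (intro measure_pmf.finite_measure_mono) auto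
  also have "\<dots> \<le> (\<Sum>i\<in>UNIV. measure_pmf.prob (pois_vec mu) (?dev i))"
    by (intro measure_pmf.finite_measure_subadditive_finite) auto
  also have "\<dots> \<le> (\<Sum>i\<in>(UNIV::'i set). 1 / K\<^sup>2)"
    using mu_pos K by (intro sum_mono pois_vec_deviation_prob_le) auto
  also have "\<dots> = CARD('i) / K\<^sup>2" by simp
  finally show ?thesis .
qed

theorem lemma3p3:
  fixes A :: "real^'i::finite^'j::finite"
    and lam0 :: "nat \<Rightarrow> real^'i"
  assumes zero_one: "\<forall>j i. A $ j $ i = 0 \<or> A $ j $ i = 1"
    and col_one: "\<forall>i. \<exists>j. A $ j $ i = 1"
    and full_row_rank: "rank A = CARD('j)"
    and in_model: "\<forall>r. lam0 r \<in> RM A"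
    and diverge: "filterlim (\<lambda>r. min_comp (lam0 r)) at_top sequentially"
  shows "\<forall>\<epsilon>>0. \<exists>M. \<exists>R. \<forall>r\<ge>R.
           measure_pmf.prob (pois_vec (lam0 r))
             {y. \<exists>lh. is_MLE A y lh \<and>
                  norm (\<chi> i. (lh $ i - lam0 r $ i) / sqrt (lam0 r $ i)) > M} < \<epsilon>"
proof (intro allI impI)
  fix \<epsilon> :: real assume "0 < \<epsilon>"
  define K where "K = CARD('i) / \<epsilon> + 1"
  have K: "1 \<le> K" using \<open>0 < \<epsilon>\<close> by (simp add: K_def)
  have "CARD('i) / \<epsilon> < K" by (simp add: K_def)
  also have "K \<le> K\<^sup>2" using K by (simp add: power2_eq_square mult_le_cancel_left1)
  finally have small: "CARD('i) / K\<^sup>2 < \<epsilon>"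
    using \<open>0 < \<epsilon>\<close> K by (simp add: field_simps)
  from diverge obtain R where R: "\<And>r. R \<le> r \<Longrightarrow> 16 * K\<^sup>2 \<le> min_comp (lam0 r)"
    by (auto simp: filterlim_at_top eventually_sequentially)
  have large: "16 * K\<^sup>2 \<le> lam0 r $ i" if "R \<le> r" for r i
    using R[OF that] Min_le[of "range (\<lambda>i. lam0 r $ i)"] unfolding min_comp_def by force
  show "\<exists>M R. \<forall>r\<ge>R. measure_pmf.prob (pois_vec (lam0 r))
          {y. \<exists>lh. is_MLE A y lh \<and> norm (\<chi> i. (lh $ i - lam0 r $ i) / sqrt (lam0 r $ i)) > M} < \<epsilon>"
    using prob_MLE_scaled_error_gt_le[OF in_model[rule_format] K large] small
    by (intro exI allI impI) (fastforce intro: le_less_trans)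
qed

end
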